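(* Let $\mathcal{R}=\mathbb{C}[\xi_0,\xi_1,\xi_2,\xi_3]$. The sequence of $\mathcal{R}$-modules $\mathcal{R}^3\xleftarrow{D_0(\xi)^t}\mathcal{R}^4\xleftarrow{D_1(\xi)^t}\mathcal{R}^1$ is exact, i.e. $\ker D_0(\xi)^t=\operatorname{Im}D_1(\xi)^t$ in $\mathcal{R}^4$.
   Context: The polynomial matrices are $D_0(\xi)^t=\frac1i\begin{pmatrix}-(\xi_2+i\xi_3)&\xi_0-i\xi_1&0&0\\-(\xi_0+i\xi_1)&-(\xi_2-i\xi_3)&-(\xi_2+i\xi_3)&\xi_0-i\xi_1\\0&0&-(\xi_0+i\xi_1)&-(\xi_2-i\xi_3)\end{pmatrix}$, $D_1(\xi)^t=\frac1i\begin{pmatrix}-\xi_0+i\xi_1\\-\xi_2-i\xi_3\\\xi_2-i\xi_3\\-\xi_0-i\xi_1\end{pmatrix}$, acting on column vectors of polynomials by matrix multiplication (these are the transposed symbols of the 2-Cauchy–Fueter operators, $\partial_{x_j}\mapsto\frac1i\xi_j$). *)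

theory Defs
  imports Complex_Main "HOL-Computational_Algebra.Polynomial"
begin

text \<open>The polynomial ring C[xi0,xi1,xi2,xi3], realised as iterated univariate
  polynomials: xi0 is the outermost variable, xi3 the innermost.\<close>

type_synonym R = "complex poly poly poly poly"

definition cst :: "complex \<Rightarrow> R" where
  "cst c = [:[:[:[:c:]:]:]:]"

definition xi0 :: R where "xi0 = [:0, 1:]"
definition xi1 :: R where "xi1 = [:[:0, 1:]:]"
definition xi2 :: R where "xi2 = [:[:[:0, 1:]:]:]"
definition xi3 :: R where "xi3 = [:[:[:[:0, 1:]:]:]:]"

definition D0t :: "R \<times> R \<times> R \<times> R \<Rightarrow> R \<times> R \<times> R" where
  "D0t v = (case v of (a, b, c, d) \<Rightarrow>
     (cst (1 / \<i>) * ( (- (xi2 + cst \<i> * xi3)) * a + (xi0 - cst \<i> * xi1) * b + 0 * c + 0 * d),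
      cst (1 / \<i>) * ( (- (xi0 + cst \<i> * xi1)) * a + (- (xi2 - cst \<i> * xi3)) * b
                       + (- (xi2 + cst \<i> * xi3)) * c + (xi0 - cst \<i> * xi1) * d),
      cst (1 / \<i>) * ( 0 * a + 0 * b + (- (xi0 + cst \<i> * xi1)) * c + (- (xi2 - cst \<i> * xi3)) * d)))"

definition D1t :: "R \<Rightarrow> R \<times> R \<times> R \<times> R" where
  "D1t p = (cst (1 / \<i>) * ((- xi0 + cst \<i> * xi1) * p),
            cst (1 / \<i>) * ((- xi2 - cst \<i> * xi3) * p),
            cst (1 / \<i>) * ((xi2 - cst \<i> * xi3) * p),
            cst (1 / \<i>) * ((- xi0 - cst \<i> * xi1) * p))"

end

theory Submission
  imports Defs
begin

text \<open>Write the ring as \<open>S[\<xi>\<^sub>0]\<close> with \<open>S = \<complex>[\<xi>\<^sub>1,\<xi>\<^sub>2,\<xi>\<^sub>3]\<close>. Up to the unit \<open>\<i>\<close>, both maps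
  are built from \<open>u = \<xi>\<^sub>0 - \<i>\<xi>\<^sub>1\<close> and \<open>u' = \<xi>\<^sub>0 + \<i>\<xi>\<^sub>1\<close>, which are monic linear in \<open>\<xi>\<^sub>0\<close>,
  and from \<open>w = \<xi>\<^sub>2 + \<i>\<xi>\<^sub>3\<close> and \<open>w' = \<xi>\<^sub>2 - \<i>\<xi>\<^sub>3\<close>, which are nonzero constants in \<open>\<xi>\<^sub>0\<close>.
  For a kernel vector \<open>(a,b,c,d)\<close>, the first equation \<open>w a = u b\<close> evaluated at the root
  of \<open>u\<close> gives \<open>u | a\<close>, hence \<open>(a,b) = (u p, w p)\<close>; likewise the third equation gives
  \<open>(c,d) = (-w' q, u' q)\<close>. The middle equation then reads \<open>(u u' + w w')(q - p) = 0\<close>,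
  and \<open>u u' + w w'\<close> is nonzero because its value at the root of \<open>u\<close> is \<open>w w' \<noteq> 0\<close>.\<close>

lemma syzygy_const_monic_linear:
  fixes z W :: "'a::idom" and a b :: "'a poly"
  assumes "W \<noteq> 0" and "[:W:] * a = [:- z, 1:] * b"
  shows "\<exists>p. a = [:- z, 1:] * p \<and> b = [:W:] * p"
proof -
  have "W * poly a z = 0"
    using arg_cong[OF assms(2), of "\<lambda>f. poly f z"] by simp
  with assms(1) have "[:- z, 1:] dvd a"
    by (simp add: poly_eq_0_iff_dvd)
  then obtain p where a: "a = [:- z, 1:] * p" ..
  with assms(2) have "[:- z, 1:] * b = [:- z, 1:] * ([:W:] * p)"
    by (simp only: mult.left_commute)
  then have "b = [:W:] * p"
    by (metis mult_left_cancel pCons_eq_0_iff one_neq_zero)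
  with a show ?thesis by blast
qed

lemma koszul_middle_exact:
  fixes z W V :: "'a::idom" and a b c d :: "'a poly"
  defines "u \<equiv> [:- z, 1:]" and "u' \<equiv> [:z, 1:]" and "w \<equiv> [:W:]" and "w' \<equiv> [:V:]"
  assumes "W \<noteq> 0" and "V \<noteq> 0"
    and first: "w * a = u * b"
    and second: "u' * a + w' * b + w * c = u * d"
    and third: "u' * c + w' * d = 0"
  shows "\<exists>p. a = u * p \<and> b = w * p \<and> c = - w' * p \<and> d = u' * p"
proof -
  obtain p where p: "a = u * p" "b = w * p"
    using syzygy_const_monic_linear[OF \<open>W \<noteq> 0\<close>] first unfolding u_def w_def by blast
  have "w' * d = u' * - c"
    using third by (simp add: add_eq_0_iff2 add.commute)
  moreover have "[:- (- z), 1:] = u'"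
    unfolding u'_def by simp
  ultimately obtain q where q: "d = u' * q" "c = - w' * q"
    using syzygy_const_monic_linear[OF \<open>V \<noteq> 0\<close>, of d "- z" "- c"] unfolding w'_def
    by (metis minus_equation_iff mult_minus_left)
  have "(u * u' + w * w') * (q - p) = u * d - u' * a - w' * b - w * c"
    using p q by (simp add: algebra_simps)
  also have "\<dots> = 0"
    using second by (simp add: algebra_simps)
  finally have "(u * u' + w * w') * (q - p) = 0" .
  moreover have "poly (u * u' + w * w') z = W * V"
    unfolding u_def u'_def w_def w'_def by simp
  then have "u * u' + w * w' \<noteq> 0"
    using assms(5,6) by (metis mult_eq_0_iff poly_0)
  ultimately have "q = p"
    by simp
  with p q show ?thesis by blast
qed

definition xi01_minus :: R where "xi01_minus = xi0 - cst \<i> * xi1"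
definition xi01_plus :: R where "xi01_plus = xi0 + cst \<i> * xi1"
definition xi23_plus :: R where "xi23_plus = xi2 + cst \<i> * xi3"
definition xi23_minus :: R where "xi23_minus = xi2 - cst \<i> * xi3"

lemma xi01_minus_pCons: "xi01_minus = [:- [:0, [:[:\<i>:]:]:], 1:]"
  by (simp add: xi01_minus_def xi0_def xi1_def cst_def)

lemma xi01_plus_pCons: "xi01_plus = [:[:0, [:[:\<i>:]:]:], 1:]"
  by (simp add: xi01_plus_def xi0_def xi1_def cst_def)

lemma xi23_plus_pCons: "xi23_plus = [:[:[:[:0, \<i>:], 1:]:]:]"
  by (simp add: xi23_plus_def xi2_def xi3_def cst_def)

lemma xi23_minus_pCons: "xi23_minus = [:[:[:[:0, - \<i>:], 1:]:]:]"
  by (simp add: xi23_minus_def xi2_def xi3_def cst_def)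

lemma cst_mult: "cst a * cst b = cst (a * b)"
  by (simp add: cst_def)

lemma cst_1: "cst 1 = 1"
  by (simp add: cst_def one_pCons)

lemma cst_divide_i: "cst (1 / \<i>) = - cst \<i>"
  by (simp add: cst_def)

lemma D0t_eq:
  "D0t (a, b, c, d) =
     (cst \<i> * (xi23_plus * a - xi01_minus * b),
      cst \<i> * (xi01_plus * a + xi23_minus * b + xi23_plus * c - xi01_minus * d),
      cst \<i> * (xi01_plus * c + xi23_minus * d))"
  unfolding D0t_def xi01_minus_def xi01_plus_def xi23_plus_def xi23_minus_def cst_divide_i
  by (simp add: algebra_simps)

lemma D1t_eq:
  "D1t p = (xi01_minus * (cst \<i> * p), xi23_plus * (cst \<i> * p),
            - xi23_minus * (cst \<i> * p), xi01_plus * (cst \<i> * p))"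
  unfolding D1t_def xi01_minus_def xi01_plus_def xi23_plus_def xi23_minus_def cst_divide_i
  by (simp add: algebra_simps)

lemma D0t_eq_0_iff:
  "D0t (a, b, c, d) = (0, 0, 0) \<longleftrightarrow>
     xi23_plus * a = xi01_minus * b \<and>
     xi01_plus * a + xi23_minus * b + xi23_plus * c = xi01_minus * d \<and>
     xi01_plus * c + xi23_minus * d = 0"
proof -
  have "cst \<i> \<noteq> 0"
    by (simp add: cst_def)
  then show ?thesis
    by (simp add: D0t_eq)
qed

lemma range_D1t:
  "range D1t = {(xi01_minus * q, xi23_plus * q, - xi23_minus * q, xi01_plus * q) | q. True}"
proof (intro equalityI subsetI)
  fix v
  assume "v \<in> {(xi01_minus * q, xi23_plus * q, - xi23_minus * q, xi01_plus * q) | q. True}"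
  then obtain q where v: "v = (xi01_minus * q, xi23_plus * q, - xi23_minus * q, xi01_plus * q)"
    by blast
  have "cst \<i> * (cst (- \<i>) * q) = q"
    by (simp add: mult.assoc[symmetric] cst_mult cst_1)
  with v have "v = D1t (cst (- \<i>) * q)"
    by (simp only: D1t_eq)
  then show "v \<in> range D1t"
    by simp
qed (auto simp: D1t_eq)

theorem proposition3p3:
  shows "{v. D0t v = (0, 0, 0)} = range D1t"
proof -
  have "D0t (a, b, c, d) = (0, 0, 0) \<longleftrightarrow>
          (\<exists>q. a = xi01_minus * q \<and> b = xi23_plus * q \<and> c = - xi23_minus * q \<and> d = xi01_plus * q)"
    for a b c d
  proof
    assume "D0t (a, b, c, d) = (0, 0, 0)"
    then show "\<exists>q. a = xi01_minus * q \<and> b = xi23_plus * q \<and> c = - xi23_minus * q \<and> d = xi01_plus * q"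
      unfolding D0t_eq_0_iff xi01_minus_pCons xi01_plus_pCons xi23_plus_pCons xi23_minus_pCons
      by (intro koszul_middle_exact) simp_all
  qed (auto simp: D0t_eq_0_iff algebra_simps)
  then show ?thesis
    by (auto simp: range_D1t)
qed

end
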